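(* Let $g_1,g_2$ be independent exponential random variables with means $\varepsilon_1,\varepsilon_2>0$. Fix rates $R_d>R_s\ge0$ and $\rho\ge0$, set $SNR=P_s/\sigma^2$, $INR=P_d/\sigma^2=SNR^\rho$. Define the events $$E_o^{\mathrm{AF}}=\Big\{\tfrac12\log_2\!\Big(1+\frac{SNR^2g_1g_2}{SNR\,g_1+(SNR+INR)g_2+1}\Big)<R_d\Big\},\qquad E_l=\Big\{\tfrac12\log_2\!\Big(1+\frac{g_1SNR}{g_2INR+1}\Big)>R_d-R_s\Big\},$$ and $p_t^{\mathrm{AF}}=\Pr(E_o^{\mathrm{AF}}\cup E_l)$. Then $$\limsup_{SNR\to\infty}\frac{-\log p_t^{\mathrm{AF}}}{\log SNR}=\begin{cases}0,&\rho\le1,\\ \rho-1,&1<\rho\le 3/2,\\ 2-\rho,&3/2<\rho\le2,\\ 0,&\rho\ge2.\end{cases}$$ In particular the generalized secure diversity gain of amplify-and-forward is at most $1/2$, attained only at $\rho=3/2$.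
   Context: Amplify-and-forward relaying in the untrusted relay channel without channel state information at the transmitter: $g_i=|h_i|^2$ with $h_i\sim\mathcal{CN}(0,\varepsilon_i)$ independent ($g_1$ source–relay, $g_2$ destination–relay and relay–destination), $P_s$ source/relay power, $P_d$ destination artificial-noise power, $\sigma^2$ noise variance, $R_d$ total rate, $R_s$ confidential rate. $E_o^{\mathrm{AF}}$ is connection outage at the destination and $E_l$ secrecy outage at the relay. The generalized secure diversity gain is $\limsup_{SNR\to\infty}(-\log p_t)/\log SNR$ with $INR=SNR^\rho$. *)

theory Defs
  imports "HOL-Probability.Probability"
begin

definition EoAF :: "real \<Rightarrow> real \<Rightarrow> real \<Rightarrow> real \<Rightarrow> real \<Rightarrow> bool" where
  "EoAF Rd snr inr g1 g2 \<longleftrightarrow>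
     1/2 * log 2 (1 + snr^2 * g1 * g2 / (snr * g1 + (snr + inr) * g2 + 1)) < Rd"

definition El :: "real \<Rightarrow> real \<Rightarrow> real \<Rightarrow> real \<Rightarrow> real \<Rightarrow> real \<Rightarrow> bool" where
  "El Rd Rs snr inr g1 g2 \<longleftrightarrow>
     1/2 * log 2 (1 + g1 * snr / (g2 * inr + 1)) > Rd - Rs"

definition ptAF :: "'w measure \<Rightarrow> ('w \<Rightarrow> real) \<Rightarrow> ('w \<Rightarrow> real) \<Rightarrow> real \<Rightarrow> real \<Rightarrow> real \<Rightarrow> real \<Rightarrow> real" where
  "ptAF M X1 X2 Rd Rs \<rho> snr =
     measure M {\<omega> \<in> space M. EoAF Rd snr (snr powr \<rho>) (X1 \<omega>) (X2 \<omega>)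
                              \<or> El Rd Rs snr (snr powr \<rho>) (X1 \<omega>) (X2 \<omega>)}"

definition dAF :: "real \<Rightarrow> real" where
  "dAF \<rho> = (if \<rho> \<le> 1 then 0 else if \<rho> \<le> 3/2 then \<rho> - 1
            else if \<rho> \<le> 2 then 2 - \<rho> else 0)"

end

theory Submission
  imports Defs
begin

text \<open>The total outage probability is squeezed between powers of the SNR s. From below, the
  secrecy outage alone occurs whenever g1 exceeds a constant and g2 \<le> s^(1 - \<rho>) (the jamming is
  too weak to blind the relay), an event of probability of order s^(1 - \<rho>); the connection
  outage alone occurs whenever g1 is below a multiple of s^(\<rho> - 2), an event of probability of
  order s^(\<rho> - 2). From above, for \<rho> \<ge> 1 neither outage can occur unless g1 > \<epsilon>1 ln s,
  g2 is of order at most s^(1 - \<rho>) ln s, g1 \<le> s^(\<rho> - 2 + \<eta>) or g2 \<le> s^(\<eta> - 1), and the union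
  bound gives p_t = O(s^(- min (\<rho> - 1) (2 - \<rho>) + \<eta>)). The exponents of both bounds agree with
  dAF \<rho> up to arbitrarily small slack, so -ln p_t / ln s even converges to it.\<close>

lemma eventually_le_powr_at_top:
  fixes a K :: real
  assumes "0 < a"
  shows "eventually (\<lambda>s. K \<le> s powr a) at_top"
  using eventually_ge_at_top[of "max 1 (\<bar>K\<bar> powr (1/a))"]
proof eventually_elim
  case (elim s)
  have "K \<le> (\<bar>K\<bar> powr (1/a)) powr a"
    using assms by (cases "K = 0") (simp_all add: powr_powr)
  also have "\<dots> \<le> s powr a"
    using elim assms by (intro powr_mono2) auto
  finally show ?case .
qed

lemma min_le_one_minus_exp:
  fixes x :: real
  assumes "0 \<le> x"
  shows "min x 1 / 2 \<le> 1 - exp (- x)"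
proof -
  have "exp (- x) \<le> 1 / (1 + x)"
    using exp_ge_add_one_self[of x] assms by (simp add: exp_minus field_simps)
  then have "x / (1 + x) \<le> 1 - exp (- x)"
    using assms by (simp add: field_simps)
  moreover have "min x 1 / 2 \<le> x / (1 + x)"
  proof (cases "x \<le> 1")
    case True
    then show ?thesis using assms mult_left_mono[of x 1 x] by (auto simp: field_simps)
  qed (use assms in \<open>auto simp: field_simps\<close>)
  ultimately show ?thesis by linarith
qed

lemma eventually_powr_le_one_minus_exp:
  fixes K L b d \<delta> :: real
  assumes "0 < K" "0 < L" "0 \<le> d" "0 < \<delta>" "- d \<le> b"
  shows "eventually (\<lambda>s. s powr (- (d + \<delta>)) \<le> K * (1 - exp (- (L * s powr b)))) at_top"
  using eventually_ge_at_top[of 1] eventually_le_powr_at_top[OF assms(4), of "2 / (K * L)"]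
    eventually_le_powr_at_top[OF assms(4), of "2 / K"]
proof eventually_elim
  case (elim s)
  have "s powr (- d) / s powr \<delta> \<le> K / 2 * (L * s powr (- d))"
    using elim assms by (simp add: field_simps mult_left_mono)
  moreover have "s powr (- d) / s powr \<delta> \<le> K / 2"
  proof -
    have "s powr (- d) \<le> 1"
      using elim assms powr_mono[of "- d" 0 s] by simp
    then have "s powr (- d) / s powr \<delta> \<le> 1 / s powr \<delta>"
      by (simp add: divide_right_mono)
    also have "\<dots> \<le> K / 2"
      using elim assms by (simp add: field_simps)
    finally show ?thesis .
  qed
  ultimately have "s powr (- (d + \<delta>)) \<le> K / 2 * min (L * s powr (- d)) 1"
    by (simp add: powr_diff[symmetric] min_def)
  also have "\<dots> \<le> K / 2 * min (L * s powr b) 1"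
    using elim assms powr_mono[of "- d" b s]
    by (intro mult_left_mono min.mono) auto
  also have "\<dots> \<le> K * (1 - exp (- (L * s powr b)))"
    using assms min_le_one_minus_exp[of "L * s powr b"] by simp
  finally show ?case .
qed

lemma tendsto_neg_ln_div_ln_at_top:
  fixes p :: "real \<Rightarrow> real" and d :: real
  assumes lower: "\<And>\<delta>. 0 < \<delta> \<Longrightarrow> eventually (\<lambda>s. s powr (- (d + \<delta>)) \<le> p s) at_top"
    and upper: "\<And>\<delta>. 0 < \<delta> \<Longrightarrow> eventually (\<lambda>s. p s \<le> s powr (- (d - \<delta>))) at_top"
  shows "((\<lambda>s. - ln (p s) / ln s) \<longlongrightarrow> d) at_top"
proof (rule tendstoI)
  fix r :: real
  assume "0 < r"
  then have "0 < r / 2" by simp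
  show "eventually (\<lambda>s. dist (- ln (p s) / ln s) d < r) at_top"
    using lower[OF \<open>0 < r / 2\<close>] upper[OF \<open>0 < r / 2\<close>] eventually_gt_at_top[of 1]
  proof eventually_elim
    case (elim s)
    have "0 < ln s" "0 < p s"
      using elim powr_gt_zero[of s "- (d + r / 2)"] by (auto simp del: powr_gt_zero)
    have "- (d + r / 2) * ln s \<le> ln (p s)"
      using elim \<open>0 < p s\<close> ln_le_cancel_iff[of "s powr (- (d + r / 2))" "p s"] by simp
    moreover have "ln (p s) \<le> - (d - r / 2) * ln s"
      using elim \<open>0 < p s\<close> ln_le_cancel_iff[of "p s" "s powr (- (d - r / 2))"] by simp
    ultimately have "d - r / 2 \<le> - ln (p s) / ln s" "- ln (p s) / ln s \<le> d + r / 2"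
      using \<open>0 < ln s\<close> by (simp_all add: field_simps)
    then show ?case
      using \<open>0 < r\<close> by (simp add: dist_real_def abs_le_iff)
  qed
qed

text \<open>The SINR at which the half-duplex link capacity 1/2 log2 (1 + x) equals R.\<close>
definition snr_threshold :: "real \<Rightarrow> real" where
  "snr_threshold R = 2 powr (2 * R) - 1"

lemma snr_threshold_pos: "0 < R \<Longrightarrow> 0 < snr_threshold R"
  unfolding snr_threshold_def using powr_less_mono[of 0 "2 * R" 2] by simp

lemma snr_threshold_nonneg: "0 \<le> R \<Longrightarrow> 0 \<le> snr_threshold R"
  unfolding snr_threshold_def using powr_mono[of 0 "2 * R" 2] by simp

lemma half_log_gt_iff:
  fixes x R :: real
  assumes "0 \<le> x"
  shows "R < 1/2 * log 2 (1 + x) \<longleftrightarrow> snr_threshold R < x"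
  using less_log_iff[of 2 "1 + x" "2 * R"] assms by (auto simp: snr_threshold_def)

lemma half_log_less_iff:
  fixes x R :: real
  assumes "0 \<le> x"
  shows "1/2 * log 2 (1 + x) < R \<longleftrightarrow> x < snr_threshold R"
  using log_less_iff[of 2 "1 + x" "2 * R"] assms by (auto simp: snr_threshold_def)

lemma El_iff:
  assumes "0 \<le> g1" "0 \<le> g2" "0 \<le> snr" "0 \<le> inr"
  shows "El Rd Rs snr inr g1 g2 \<longleftrightarrow> snr_threshold (Rd - Rs) * (g2 * inr + 1) < g1 * snr"
proof -
  have "0 < g2 * inr + 1"
    using assms by (simp add: add_nonneg_pos)
  then show ?thesis
    using assms half_log_gt_iff[of "g1 * snr / (g2 * inr + 1)" "Rd - Rs"]
    by (simp add: El_def pos_less_divide_eq)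
qed

lemma EoAF_iff:
  assumes "0 \<le> g1" "0 \<le> g2" "0 \<le> snr" "0 \<le> inr"
  shows "EoAF Rd snr inr g1 g2 \<longleftrightarrow>
    snr^2 * g1 * g2 < snr_threshold Rd * (snr * g1 + (snr + inr) * g2 + 1)"
proof -
  have "0 < snr * g1 + (snr + inr) * g2 + 1"
    using assms by (intro add_nonneg_pos) auto
  then show ?thesis
    using assms half_log_less_iff[of "snr^2 * g1 * g2 / (snr * g1 + (snr + inr) * g2 + 1)" Rd]
    by (simp add: EoAF_def pos_divide_less_eq)
qed

lemma El_if_strong_source:
  assumes "Rs < Rd" "1 \<le> s" "2 * snr_threshold (Rd - Rs) < g1" "0 \<le> g2" "g2 \<le> s powr (1 - \<rho>)"
  shows "El Rd Rs s (s powr \<rho>) g1 g2"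
proof -
  define c where "c = snr_threshold (Rd - Rs)"
  have "0 < c"
    using assms by (simp add: c_def snr_threshold_pos)
  have "g2 * s powr \<rho> \<le> s powr (1 - \<rho>) * s powr \<rho>"
    using assms by (intro mult_right_mono) auto
  also have "\<dots> = s"
    using assms by (simp add: powr_add[symmetric])
  finally have "c * (g2 * s powr \<rho> + 1) \<le> c * (2 * s)"
    using assms \<open>0 < c\<close> by (intro mult_left_mono) auto
  also have "\<dots> < g1 * s"
    using assms by (simp add: c_def)
  finally have "c * (g2 * s powr \<rho> + 1) < g1 * s" .
  moreover have "0 \<le> g1"
    using assms \<open>0 < c\<close> by (simp add: c_def)
  ultimately show ?thesis
    using assms by (subst El_iff) (auto simp: c_def)
qed

lemma EoAF_if_weak_source:
  assumes "0 < Rd" "0 < s" "0 \<le> g1" "g1 \<le> snr_threshold Rd / 2 * s powr (\<rho> - 2)" "0 \<le> g2"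
  shows "EoAF Rd s (s powr \<rho>) g1 g2"
proof -
  define e where "e = snr_threshold Rd"
  have "0 < e"
    using assms by (simp add: e_def snr_threshold_pos)
  have "s^2 * g1 * g2 \<le> s^2 * (e / 2 * s powr (\<rho> - 2)) * g2"
    using assms by (intro mult_right_mono mult_left_mono) (auto simp: e_def)
  also have "\<dots> = e / 2 * (s powr \<rho> * g2)"
    using assms by (simp add: powr_diff powr_numeral)
  also have "\<dots> < e * (s powr \<rho> * g2 + 1)"
    using assms \<open>0 < e\<close> by (simp add: algebra_simps add_pos_nonneg)
  also have "\<dots> \<le> e * (s * g1 + (s + s powr \<rho>) * g2 + 1)"
    using assms \<open>0 < e\<close> by (intro mult_left_mono) (auto simp: algebra_simps)
  finally show ?thesis
    using assms by (subst EoAF_iff) (auto simp: e_def)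
qed

lemma not_El_if_source_le_jamming:
  assumes "0 \<le> g1" "0 \<le> g2" "0 < s" "Rs < Rd"
    and "g1 * s \<le> snr_threshold (Rd - Rs) * g2 * s powr \<rho>"
  shows "\<not> El Rd Rs s (s powr \<rho>) g1 g2"
proof -
  have "0 < snr_threshold (Rd - Rs)"
    using assms by (simp add: snr_threshold_pos)
  then show ?thesis
    using assms by (subst El_iff) (auto simp: algebra_simps)
qed

lemma not_EoAF_if_strong_gains:
  assumes "0 \<le> Rd" "1 < s" "1 \<le> \<rho>" "0 < \<eta>" "6 * snr_threshold Rd \<le> s powr \<eta>"
    and g1: "s powr (\<rho> - 2 + \<eta>) < g1" and g2: "s powr (\<eta> - 1) < g2"
  shows "\<not> EoAF Rd s (s powr \<rho>) g1 g2"
proof -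
  define e where "e = snr_threshold Rd"
  have "0 \<le> e"
    using assms by (simp add: e_def snr_threshold_nonneg)
  have "0 < g1" "0 < g2"
    using g1 g2 powr_gt_zero[of s] assms by (auto simp del: powr_gt_zero intro: less_trans)
  \<comment> \<open>Each of the three summands of e times the denominator is at most s^2 g1 g2 / 3.\<close>
  have "s powr \<eta> < s * g2"
    using g2 assms by (simp add: powr_diff field_simps)
  then have "3 * e \<le> s * g2"
    using assms \<open>0 \<le> e\<close> by (simp add: e_def)
  then have term1: "3 * e * (s * g1) \<le> s^2 * g1 * g2"
    using assms \<open>0 < g1\<close> mult_right_mono[of "3 * e" "s * g2" "s * g1"]
    by (simp add: power2_eq_square algebra_simps)
  have "s \<le> s powr \<rho>"
    using assms powr_mono[of 1 \<rho> s] by simp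
  then have "3 * e * (s + s powr \<rho>) \<le> 6 * e * s powr \<rho>"
    using \<open>0 \<le> e\<close> mult_left_mono[of s "s powr \<rho>" e] by (simp add: algebra_simps)
  also have "\<dots> \<le> s powr \<eta> * s powr \<rho>"
    using assms by (intro mult_right_mono) (auto simp: e_def)
  also have "\<dots> = s^2 * s powr (\<rho> - 2 + \<eta>)"
    using assms by (simp add: powr_add powr_diff powr_numeral)
  also have "\<dots> \<le> s^2 * g1"
    using g1 by (intro mult_left_mono) auto
  finally have term2: "3 * e * (s + s powr \<rho>) * g2 \<le> s^2 * g1 * g2"
    using \<open>0 < g2\<close> by (simp add: mult_right_mono)
  have "3 * e \<le> s powr \<eta>"
    using assms \<open>0 \<le> e\<close> by (simp add: e_def)
  also have "\<dots> \<le> s powr (\<rho> - 1 + 2 * \<eta>)"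
    using assms by (intro powr_mono) auto
  also have "\<dots> = s powr 2 * s powr (\<rho> - 2 + \<eta>) * s powr (\<eta> - 1)"
    by (simp add: powr_add[symmetric] algebra_simps)
  also have "\<dots> = s^2 * s powr (\<rho> - 2 + \<eta>) * s powr (\<eta> - 1)"
    using assms by (simp add: powr_numeral)
  also have "\<dots> \<le> s^2 * g1 * g2"
    using assms g1 g2 \<open>0 < g1\<close> by (intro mult_mono) auto
  finally have term3: "3 * e \<le> s^2 * g1 * g2" .
  have "e * (s * g1 + (s + s powr \<rho>) * g2 + 1) \<le> s^2 * g1 * g2"
    using term1 term2 term3 by (simp add: algebra_simps)
  then show ?thesis
    using assms \<open>0 < g1\<close> \<open>0 < g2\<close> by (subst EoAF_iff) (auto simp: e_def)
qed

lemma (in prob_space) exponential_prob_le_linear: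
  assumes "distributed M lborel X (exponential_density l)" "0 < l" "0 \<le> a"
  shows "\<P>(x in M. X x \<le> a) \<le> a * l"
  using exponential_distributedD_le[OF assms(1,3,2)] exp_ge_add_one_self[of "- a * l"] by simp

locale exponential_gains = prob_space M for M :: "'w measure" +
  fixes X1 X2 :: "'w \<Rightarrow> real" and \<epsilon>1 \<epsilon>2 :: real
  assumes means_pos: "0 < \<epsilon>1" "0 < \<epsilon>2"
    and X1_exponential: "distributed M lborel X1 (exponential_density (1 / \<epsilon>1))"
    and X2_exponential: "distributed M lborel X2 (exponential_density (1 / \<epsilon>2))"
    and independent: "indep_var borel X1 borel X2"
begin

lemma measurable_gains [measurable]: "X1 \<in> borel_measurable M" "X2 \<in> borel_measurable M"
  using X1_exponential X2_exponential means_pos exponential_distributed_iff by auto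

lemma AE_gains_nonneg: "AE \<omega> in M. 0 \<le> X1 \<omega> \<and> 0 \<le> X2 \<omega>"
proof -
  have "AE \<omega> in M. 0 \<le> X1 \<omega>"
    by (subst distributed_AE2[OF X1_exponential]) (auto simp: exponential_density_def)
  moreover have "AE \<omega> in M. 0 \<le> X2 \<omega>"
    by (subst distributed_AE2[OF X2_exponential]) (auto simp: exponential_density_def)
  ultimately show ?thesis by eventually_elim simp
qed

lemma prob_X1_gt: "0 \<le> a \<Longrightarrow> \<P>(\<omega> in M. a < X1 \<omega>) = exp (- (a / \<epsilon>1))"
  using exponential_distributedD_gt[OF X1_exponential] means_pos by simp

lemma prob_X1_le: "0 \<le> a \<Longrightarrow> \<P>(\<omega> in M. X1 \<omega> \<le> a) = 1 - exp (- (a / \<epsilon>1))"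
  using exponential_distributedD_le[OF X1_exponential] means_pos by simp

lemma prob_X2_le: "0 \<le> a \<Longrightarrow> \<P>(\<omega> in M. X2 \<omega> \<le> a) = 1 - exp (- (a / \<epsilon>2))"
  using exponential_distributedD_le[OF X2_exponential] means_pos by simp

lemma prob_X1_le_linear: "0 \<le> a \<Longrightarrow> \<P>(\<omega> in M. X1 \<omega> \<le> a) \<le> a / \<epsilon>1"
  using exponential_prob_le_linear[OF X1_exponential] means_pos by simp

lemma prob_X2_le_linear: "0 \<le> a \<Longrightarrow> \<P>(\<omega> in M. X2 \<omega> \<le> a) \<le> a / \<epsilon>2"
  using exponential_prob_le_linear[OF X2_exponential] means_pos by simp

lemma pred_outage [measurable]:
  "Measurable.pred M (\<lambda>\<omega>. EoAF Rd snr inr (X1 \<omega>) (X2 \<omega>) \<or> El Rd Rs snr inr (X1 \<omega>) (X2 \<omega>))"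
  unfolding EoAF_def El_def by measurable

lemma ptAF_ge_leakage:
  assumes "Rs < Rd" "1 \<le> s"
  shows "exp (- (2 * snr_threshold (Rd - Rs) / \<epsilon>1)) * (1 - exp (- (s powr (1 - \<rho>) / \<epsilon>2)))
    \<le> ptAF M X1 X2 Rd Rs \<rho> s"
proof -
  define c where "c = snr_threshold (Rd - Rs)"
  have "0 < c"
    using assms by (simp add: c_def snr_threshold_pos)
  have "exp (- (2 * c / \<epsilon>1)) * (1 - exp (- (s powr (1 - \<rho>) / \<epsilon>2)))
      = \<P>(\<omega> in M. X1 \<omega> \<in> {2 * c<..}) * \<P>(\<omega> in M. X2 \<omega> \<in> {..s powr (1 - \<rho>)})"
    using prob_X1_gt[of "2 * c"] prob_X2_le[of "s powr (1 - \<rho>)"] \<open>0 < c\<close> by simp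
  also have "\<dots> = \<P>(\<omega> in M. X1 \<omega> \<in> {2 * c<..} \<and> X2 \<omega> \<in> {..s powr (1 - \<rho>)})"
    by (rule prob_indep_random_variable[OF independent, symmetric]) auto
  also have "\<dots> \<le> ptAF M X1 X2 Rd Rs \<rho> s"
    unfolding ptAF_def
  proof (rule finite_measure_mono_AE)
    show "AE \<omega> in M. \<omega> \<in> {\<omega> \<in> space M. X1 \<omega> \<in> {2 * c<..} \<and> X2 \<omega> \<in> {..s powr (1 - \<rho>)}}
      \<longrightarrow> \<omega> \<in> {\<omega> \<in> space M. EoAF Rd s (s powr \<rho>) (X1 \<omega>) (X2 \<omega>) \<or> El Rd Rs s (s powr \<rho>) (X1 \<omega>) (X2 \<omega>)}"
      using AE_gains_nonneg by eventually_elim (use assms El_if_strong_source in \<open>auto simp: c_def\<close>)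
  qed measurable
  finally show ?thesis
    by (simp add: c_def)
qed

lemma ptAF_ge_outage:
  assumes "0 < Rd" "0 < s"
  shows "1 - exp (- (snr_threshold Rd / (2 * \<epsilon>1) * s powr (\<rho> - 2))) \<le> ptAF M X1 X2 Rd Rs \<rho> s"
proof -
  define a where "a = snr_threshold Rd / 2 * s powr (\<rho> - 2)"
  have "0 \<le> a"
    using assms by (simp add: a_def snr_threshold_nonneg)
  have "1 - exp (- (snr_threshold Rd / (2 * \<epsilon>1) * s powr (\<rho> - 2))) = \<P>(\<omega> in M. X1 \<omega> \<le> a)"
    using prob_X1_le[OF \<open>0 \<le> a\<close>] by (simp add: a_def)
  also have "\<dots> \<le> ptAF M X1 X2 Rd Rs \<rho> s"
    unfolding ptAF_def
  proof (rule finite_measure_mono_AE)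
    show "AE \<omega> in M. \<omega> \<in> {\<omega> \<in> space M. X1 \<omega> \<le> a}
      \<longrightarrow> \<omega> \<in> {\<omega> \<in> space M. EoAF Rd s (s powr \<rho>) (X1 \<omega>) (X2 \<omega>) \<or> El Rd Rs s (s powr \<rho>) (X1 \<omega>) (X2 \<omega>)}"
      using AE_gains_nonneg by eventually_elim (use assms EoAF_if_weak_source in \<open>auto simp: a_def\<close>)
  qed measurable
  finally show ?thesis .
qed

lemma ptAF_le_sum:
  assumes "0 \<le> Rs" "Rs < Rd" "1 < s" "1 \<le> \<rho>" "0 < \<eta>" "6 * snr_threshold Rd \<le> s powr \<eta>"
  shows "ptAF M X1 X2 Rd Rs \<rho> s \<le> 1 / s + \<epsilon>1 / (snr_threshold (Rd - Rs) * \<epsilon>2) * ln s * s powr (1 - \<rho>)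
    + s powr (\<rho> - 2 + \<eta>) / \<epsilon>1 + s powr (\<eta> - 1) / \<epsilon>2"
proof -
  define c where "c = snr_threshold (Rd - Rs)"
  define t where "t = \<epsilon>1 * ln s"
  define u where "u = t * s powr (1 - \<rho>) / c"
  have "0 < c"
    using assms by (simp add: c_def snr_threshold_pos)
  have "0 \<le> t" "0 \<le> u"
    using assms means_pos \<open>0 < c\<close> by (simp_all add: t_def u_def)
  define S1 where "S1 = {\<omega> \<in> space M. t < X1 \<omega>}"
  define S2 where "S2 = {\<omega> \<in> space M. X2 \<omega> \<le> u}"
  define S3 where "S3 = {\<omega> \<in> space M. X1 \<omega> \<le> s powr (\<rho> - 2 + \<eta>)}"
  define S4 where "S4 = {\<omega> \<in> space M. X2 \<omega> \<le> s powr (\<eta> - 1)}"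
  have [measurable]: "S1 \<in> sets M" "S2 \<in> sets M" "S3 \<in> sets M" "S4 \<in> sets M"
    unfolding S1_def S2_def S3_def S4_def by measurable
  have "ptAF M X1 X2 Rd Rs \<rho> s \<le> measure M (S1 \<union> S2 \<union> S3 \<union> S4)"
    unfolding ptAF_def
  proof (rule finite_measure_mono_AE)
    show "AE \<omega> in M. \<omega> \<in> {\<omega> \<in> space M. EoAF Rd s (s powr \<rho>) (X1 \<omega>) (X2 \<omega>) \<or> El Rd Rs s (s powr \<rho>) (X1 \<omega>) (X2 \<omega>)}
      \<longrightarrow> \<omega> \<in> S1 \<union> S2 \<union> S3 \<union> S4"
      using AE_gains_nonneg
    proof eventually_elim
      case (elim \<omega>)
      show ?case
      proof (rule impI, rule ccontr)
        assume outage: "\<omega> \<in> {\<omega> \<in> space M. EoAF Rd s (s powr \<rho>) (X1 \<omega>) (X2 \<omega>) \<or> El Rd Rs s (s powr \<rho>) (X1 \<omega>) (X2 \<omega>)}"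
          and "\<omega> \<notin> S1 \<union> S2 \<union> S3 \<union> S4"
        then have "X1 \<omega> \<le> t" "u < X2 \<omega>" "s powr (\<rho> - 2 + \<eta>) < X1 \<omega>" "s powr (\<eta> - 1) < X2 \<omega>"
          by (auto simp: S1_def S2_def S3_def S4_def)
        have "X1 \<omega> * s \<le> t * s"
          using \<open>X1 \<omega> \<le> t\<close> assms by simp
        also have "\<dots> = c * u * s powr \<rho>"
          using assms \<open>0 < c\<close> by (simp add: u_def powr_diff field_simps)
        also have "\<dots> \<le> c * X2 \<omega> * s powr \<rho>"
          using \<open>u < X2 \<omega>\<close> \<open>0 < c\<close> by (intro mult_right_mono mult_left_mono) auto
        finally have "\<not> El Rd Rs s (s powr \<rho>) (X1 \<omega>) (X2 \<omega>)"
          using elim assms by (intro not_El_if_source_le_jamming) (auto simp: c_def)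
        moreover have "\<not> EoAF Rd s (s powr \<rho>) (X1 \<omega>) (X2 \<omega>)"
          using assms \<open>s powr (\<rho> - 2 + \<eta>) < X1 \<omega>\<close> \<open>s powr (\<eta> - 1) < X2 \<omega>\<close>
          by (intro not_EoAF_if_strong_gains) auto
        ultimately show False
          using outage by simp
      qed
    qed
  qed measurable
  also have "\<dots> \<le> measure M S1 + measure M S2 + measure M S3 + measure M S4"
    using measure_Un_le[of "S1 \<union> S2 \<union> S3" M S4] measure_Un_le[of "S1 \<union> S2" M S3]
      measure_Un_le[of S1 M S2]
    by simp
  also have "measure M S1 = 1 / s"
    using prob_X1_gt[OF \<open>0 \<le> t\<close>] means_pos assms by (simp add: S1_def t_def exp_minus inverse_eq_divide)
  also have "measure M S2 \<le> \<epsilon>1 / (c * \<epsilon>2) * ln s * s powr (1 - \<rho>)"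
    using prob_X2_le_linear[OF \<open>0 \<le> u\<close>] by (simp add: S2_def u_def t_def field_simps)
  also have "measure M S3 \<le> s powr (\<rho> - 2 + \<eta>) / \<epsilon>1"
    unfolding S3_def by (rule prob_X1_le_linear) simp
  also have "measure M S4 \<le> s powr (\<eta> - 1) / \<epsilon>2"
    unfolding S4_def by (rule prob_X2_le_linear) simp
  finally show ?thesis
    by (simp add: c_def)
qed

end

lemma eventually_sum_le_powr:
  fixes a b1 b2 d \<delta> \<rho> :: real
  assumes "0 \<le> a" "0 < b1" "0 < b2" "0 < \<delta>" "d \<le> \<rho> - 1" "d \<le> 2 - \<rho>"
  shows "eventually (\<lambda>s. 1 / s + a * ln s * s powr (1 - \<rho>) + s powr (\<rho> - 2 + \<delta> / 2) / b1
    + s powr (\<delta> / 2 - 1) / b2 \<le> s powr (- (d - \<delta>))) at_top"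
proof -
  define \<eta> where "\<eta> = \<delta> / 2"
  have "0 < \<eta>"
    using assms by (simp add: \<eta>_def)
  define K where "K = 1 + a / \<eta> + 1 / b1 + 1 / b2"
  show ?thesis
    using eventually_ge_at_top[of 1] eventually_le_powr_at_top[OF \<open>0 < \<eta>\<close>, of K]
  proof eventually_elim
    case (elim s)
    have "1 / s \<le> s powr (- d + \<eta>)"
      using elim assms \<open>0 < \<eta>\<close> powr_mono[of "- 1" "- d + \<eta>" s] by (simp add: powr_minus_divide)
    moreover have "a * ln s * s powr (1 - \<rho>) \<le> a / \<eta> * s powr (- d + \<eta>)"
    proof -
      have "a * ln s * s powr (1 - \<rho>) \<le> a * (s powr \<eta> / \<eta>) * s powr (1 - \<rho>)"
        using ln_powr_bound[OF elim(1) \<open>0 < \<eta>\<close>] assms by (intro mult_right_mono mult_left_mono) auto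
      also have "\<dots> = a / \<eta> * s powr (1 - \<rho> + \<eta>)"
        by (simp add: powr_add)
      also have "\<dots> \<le> a / \<eta> * s powr (- d + \<eta>)"
        using elim assms \<open>0 < \<eta>\<close> by (intro mult_left_mono powr_mono) auto
      finally show ?thesis .
    qed
    moreover have "s powr (\<rho> - 2 + \<eta>) / b1 \<le> s powr (- d + \<eta>) / b1"
      using elim assms by (intro divide_right_mono powr_mono) auto
    moreover have "s powr (\<eta> - 1) / b2 \<le> s powr (- d + \<eta>) / b2"
      using elim assms by (intro divide_right_mono powr_mono) auto
    ultimately have "1 / s + a * ln s * s powr (1 - \<rho>) + s powr (\<rho> - 2 + \<eta>) / b1
        + s powr (\<eta> - 1) / b2 \<le> K * s powr (- d + \<eta>)"
      by (simp add: K_def algebra_simps)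
    also have "\<dots> \<le> s powr \<eta> * s powr (- d + \<eta>)"
      using elim by (intro mult_right_mono) auto
    also have "\<dots> = s powr (- (d - \<delta>))"
      by (simp add: \<eta>_def powr_add[symmetric])
    finally show ?case
      by (simp add: \<eta>_def)
  qed
qed

context exponential_gains
begin

lemma eventually_ptAF_lower:
  assumes "0 \<le> Rs" "Rs < Rd" "0 < \<delta>"
  shows "eventually (\<lambda>s. s powr (- (dAF \<rho> + \<delta>)) \<le> ptAF M X1 X2 Rd Rs \<rho> s) at_top"
proof (cases "\<rho> \<le> 3/2")
  case True
  have "eventually (\<lambda>s. s powr (- (dAF \<rho> + \<delta>))
      \<le> exp (- (2 * snr_threshold (Rd - Rs) / \<epsilon>1)) * (1 - exp (- (1 / \<epsilon>2 * s powr (1 - \<rho>))))) at_top"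
    using True assms means_pos by (intro eventually_powr_le_one_minus_exp) (auto simp: dAF_def)
  with eventually_ge_at_top[of 1] show ?thesis
  proof eventually_elim
    case (elim s)
    then show ?case
      using ptAF_ge_leakage[of Rs Rd s \<rho>] assms by (simp add: mult.commute[of "1 / \<epsilon>2"])
  qed
next
  case False
  have "eventually (\<lambda>s. s powr (- (dAF \<rho> + \<delta>))
      \<le> 1 * (1 - exp (- (snr_threshold Rd / (2 * \<epsilon>1) * s powr (\<rho> - 2))))) at_top"
    using False assms means_pos snr_threshold_pos[of Rd]
    by (intro eventually_powr_le_one_minus_exp) (auto simp: dAF_def)
  with eventually_gt_at_top[of 0] show ?thesis
  proof eventually_elim
    case (elim s)
    then show ?case
      using ptAF_ge_outage[of Rd s \<rho> Rs] assms by simp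
  qed
qed

lemma eventually_ptAF_upper:
  assumes "0 \<le> Rs" "Rs < Rd" "0 < \<delta>"
  shows "eventually (\<lambda>s. ptAF M X1 X2 Rd Rs \<rho> s \<le> s powr (- (dAF \<rho> - \<delta>))) at_top"
proof (cases "\<rho> \<le> 1 \<or> 2 \<le> \<rho>")
  case True
  then have "dAF \<rho> = 0"
    by (auto simp: dAF_def)
  show ?thesis
    using eventually_ge_at_top[of 1]
  proof eventually_elim
    case (elim s)
    have "ptAF M X1 X2 Rd Rs \<rho> s \<le> 1"
      by (simp add: ptAF_def)
    also have "1 \<le> s powr \<delta>"
      using elim assms by (simp add: ge_one_powr_ge_zero)
    finally show ?case
      using \<open>dAF \<rho> = 0\<close> by simp
  qed
next
  case False
  have "0 < snr_threshold (Rd - Rs)"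
    using assms by (simp add: snr_threshold_pos)
  have "eventually (\<lambda>s. 1 / s + \<epsilon>1 / (snr_threshold (Rd - Rs) * \<epsilon>2) * ln s * s powr (1 - \<rho>)
      + s powr (\<rho> - 2 + \<delta> / 2) / \<epsilon>1 + s powr (\<delta> / 2 - 1) / \<epsilon>2 \<le> s powr (- (dAF \<rho> - \<delta>))) at_top"
    using False assms means_pos \<open>0 < snr_threshold (Rd - Rs)\<close>
    by (intro eventually_sum_le_powr) (auto simp: dAF_def)
  moreover have "eventually (\<lambda>s. 6 * snr_threshold Rd \<le> s powr (\<delta> / 2)) at_top"
    using assms by (intro eventually_le_powr_at_top) simp
  ultimately show ?thesis
    using eventually_gt_at_top[of 1]
  proof eventually_elim
    case (elim s)
    then show ?case
      using ptAF_le_sum[of Rs Rd s \<rho> "\<delta> / 2"] False assms by simp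
  qed
qed

end

theorem mainTheorem8:
  fixes M :: "'w measure" and X1 X2 :: "'w \<Rightarrow> real"
    and \<epsilon>1 \<epsilon>2 Rd Rs \<rho> :: real
  assumes "prob_space M"
    and "\<epsilon>1 > 0" and "\<epsilon>2 > 0"
    and "distributed M lborel X1 (exponential_density (1 / \<epsilon>1))"
    and "distributed M lborel X2 (exponential_density (1 / \<epsilon>2))"
    and "prob_space.indep_var M borel X1 borel X2"
    and "Rd > Rs" and "Rs \<ge> 0" and "\<rho> \<ge> 0"
  shows "Limsup at_top (\<lambda>snr. ereal (- ln (ptAF M X1 X2 Rd Rs \<rho> snr) / ln snr)) = ereal (dAF \<rho>)
         \<and> dAF \<rho> \<le> 1/2 \<and> (dAF \<rho> = 1/2 \<longleftrightarrow> \<rho> = 3/2)"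
proof -
  interpret exponential_gains M X1 X2 \<epsilon>1 \<epsilon>2
    using assms by (intro exponential_gains.intro exponential_gains_axioms.intro) auto
  have "((\<lambda>s. - ln (ptAF M X1 X2 Rd Rs \<rho> s) / ln s) \<longlongrightarrow> dAF \<rho>) at_top"
    using assms by (intro tendsto_neg_ln_div_ln_at_top eventually_ptAF_lower eventually_ptAF_upper)
  then have "Limsup at_top (\<lambda>s. ereal (- ln (ptAF M X1 X2 Rd Rs \<rho> s) / ln s)) = ereal (dAF \<rho>)"
    by (intro lim_imp_Limsup) auto
  moreover have "dAF \<rho> \<le> 1/2 \<and> (dAF \<rho> = 1/2 \<longleftrightarrow> \<rho> = 3/2)"
    by (auto simp: dAF_def)
  ultimately show ?thesis
    by simp
qed

end
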